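(* Let $D=\{(x,y)\in\mathbb{R}^2 \mid x+y\neq 1\}$ and $f(x,y)=(x+y)e^{-x}$. The 3-web on $D$ formed by the three foliations whose leaves are the level curves $x=\text{const}$, $y=\text{const}$ and $f(x,y)=\text{const}$ is linearizable: near every point of $D$ there is a local diffeomorphism onto an open subset of $\mathbb{R}^2$ carrying the leaves of all three foliations onto (open pieces of) straight lines.
   Context: A 3-web on a 2-dimensional manifold is given by three foliations by smooth curves in general position (pairwise transversal). A 3-web is linear if all three foliations consist of straight lines; it is linearizable if it is locally equivalent to a linear web via a local diffeomorphism. *)

theory Defs
  imports "HOL-Analysis.Analysis"
begin

text \<open>A real function h on an open set S is C-infinity iff it belongs to some family F
  of functions, each of which is differentiable at every point of S with both
  partial derivatives again in F (the greatest such family is the set of smooth functions).\<close>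

definition smooth_on :: "(real \<times> real) set \<Rightarrow> (real \<times> real \<Rightarrow> real) \<Rightarrow> bool" where
  "smooth_on S g \<longleftrightarrow>
     (\<exists>F. g \<in> F \<and>
       (\<forall>h\<in>F. continuous_on S h \<and>
          (\<exists>a\<in>F. \<exists>b\<in>F. \<forall>p\<in>S.
             (h has_derivative (\<lambda>(u, v). a p * u + b p * v)) (at p))))"

definition smooth_map_on :: "(real \<times> real) set \<Rightarrow> (real \<times> real \<Rightarrow> real \<times> real) \<Rightarrow> bool" where
  "smooth_map_on S \<phi> \<longleftrightarrow> smooth_on S (\<lambda>p. fst (\<phi> p)) \<and> smooth_on S (\<lambda>p. snd (\<phi> p))"

definition diffeo_onto_open :: "(real \<times> real) set \<Rightarrow> (real \<times> real \<Rightarrow> real \<times> real) \<Rightarrow> bool" where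
  "diffeo_onto_open U \<phi> \<longleftrightarrow>
     open U \<and> open (\<phi> ` U) \<and> inj_on \<phi> U \<and> smooth_map_on U \<phi> \<and>
     (\<exists>\<psi>. smooth_map_on (\<phi> ` U) \<psi> \<and> (\<forall>p\<in>U. \<psi> (\<phi> p) = p))"

definition line :: "real \<times> real \<Rightarrow> real \<times> real \<Rightarrow> (real \<times> real) set" where
  "line a v = {a + t *\<^sub>R v | t. True}"

definition local_leaf :: "(real \<times> real) set \<Rightarrow> (real \<times> real \<Rightarrow> real) \<Rightarrow> real \<times> real \<Rightarrow> (real \<times> real) set" where
  "local_leaf U g q = connected_component_set {r \<in> U. g r = g q} q"

definition linearizable_web ::
  "(real \<times> real) set \<Rightarrow> (real \<times> real \<Rightarrow> real) \<Rightarrow> (real \<times> real \<Rightarrow> real) \<Rightarrow> (real \<times> real \<Rightarrow> real) \<Rightarrow> bool" where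
  "linearizable_web D g1 g2 g3 \<longleftrightarrow>
     (\<forall>p\<in>D. \<exists>U \<phi>. p \<in> U \<and> U \<subseteq> D \<and> diffeo_onto_open U \<phi> \<and>
        (\<forall>g\<in>{g1, g2, g3}. \<forall>q\<in>U. \<exists>a v. v \<noteq> 0 \<and> \<phi> ` local_leaf U g q \<subseteq> line a v))"

end

theory Submission
  imports Defs
begin

text \<open>The chart phi(x, y) = (y, f(x, y)) linearizes the web: it maps the leaf x = c into the line
  Y2 = e^(-c) (c + Y1), the leaf y = c into the vertical line Y1 = c, and the leaf f = c into the
  horizontal line Y2 = c. Its Jacobian determinant (x + y - 1) e^(-x) vanishes nowhere on D, and
  on each half-plane x + y < 1, x + y > 1 the map t \<mapsto> (t + y) e^(-t) is strictly monotone, so phi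
  is injective there; invariance of domain and the inverse function theorem make it a
  diffeomorphism onto an open set. Smoothness is obtained without iterating derivatives: a function
  is smooth as soon as it lies in an algebra whose generators have their partial derivatives in
  that algebra. For the inverse psi the generators are psi1, psi2, e^psi1 and 1 / (1 - psi1 - psi2),
  the partials of psi1 being -1 / (1 - psi1 - psi2) and e^psi1 / (1 - psi1 - psi2).\<close>

inductive_set generated_algebra :: "(real \<times> real \<Rightarrow> real) set \<Rightarrow> (real \<times> real \<Rightarrow> real) set"
  for G where
  generator: "g \<in> G \<Longrightarrow> g \<in> generated_algebra G"
| const: "(\<lambda>p. c) \<in> generated_algebra G"
| add: "f \<in> generated_algebra G \<Longrightarrow> g \<in> generated_algebra G \<Longrightarrow> (\<lambda>p. f p + g p) \<in> generated_algebra G"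
| mult: "f \<in> generated_algebra G \<Longrightarrow> g \<in> generated_algebra G \<Longrightarrow> (\<lambda>p. f p * g p) \<in> generated_algebra G"

lemma generated_algebra_uminus:
  assumes "f \<in> generated_algebra G"
  shows "(\<lambda>p. - f p) \<in> generated_algebra G"
proof -
  have "(\<lambda>p. (\<lambda>p. -1) p * f p) \<in> generated_algebra G"
    by (intro generated_algebra.mult generated_algebra.const assms)
  then show ?thesis by simp
qed

lemma generated_algebra_diff:
  assumes "f \<in> generated_algebra G" "g \<in> generated_algebra G"
  shows "(\<lambda>p. f p - g p) \<in> generated_algebra G"
  using generated_algebra.add[OF assms(1) generated_algebra_uminus[OF assms(2)]] by simp

definition has_partials_in ::
  "(real \<times> real) set \<Rightarrow> (real \<times> real \<Rightarrow> real) set \<Rightarrow> (real \<times> real \<Rightarrow> real) \<Rightarrow> bool" where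
  "has_partials_in S F h \<longleftrightarrow>
     (\<exists>a\<in>F. \<exists>b\<in>F. \<forall>p\<in>S. (h has_derivative (\<lambda>(u, v). a p * u + b p * v)) (at p))"

lemma has_partials_inI:
  assumes "a \<in> F" "b \<in> F" "\<And>p. p \<in> S \<Longrightarrow> (h has_derivative (\<lambda>(u, v). a p * u + b p * v)) (at p)"
  shows "has_partials_in S F h"
  using assms unfolding has_partials_in_def by blast

lemma has_partials_inE:
  assumes "has_partials_in S F h"
  obtains a b where "a \<in> F" "b \<in> F" "\<And>p. p \<in> S \<Longrightarrow> (h has_derivative (\<lambda>(u, v). a p * u + b p * v)) (at p)"
  using assms unfolding has_partials_in_def by blast

lemma has_partials_in_const: "has_partials_in S (generated_algebra G) (\<lambda>p. c)"
  by (rule has_partials_inI[where a = "\<lambda>p. 0" and b = "\<lambda>p. 0"])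
     (auto intro: generated_algebra.const intro!: has_derivative_eq_rhs[OF has_derivative_const])

lemma has_partials_in_add:
  assumes "has_partials_in S (generated_algebra G) f" "has_partials_in S (generated_algebra G) g"
  shows "has_partials_in S (generated_algebra G) (\<lambda>p. f p + g p)"
proof -
  obtain a1 b1 a2 b2 where
    coeffs: "a1 \<in> generated_algebra G" "b1 \<in> generated_algebra G"
      "a2 \<in> generated_algebra G" "b2 \<in> generated_algebra G"
    and df: "\<And>p. p \<in> S \<Longrightarrow> (f has_derivative (\<lambda>(u, v). a1 p * u + b1 p * v)) (at p)"
    and dg: "\<And>p. p \<in> S \<Longrightarrow> (g has_derivative (\<lambda>(u, v). a2 p * u + b2 p * v)) (at p)"
    using assms by (elim has_partials_inE) blast
  show ?thesis
    by (rule has_partials_inI[OF generated_algebra.add generated_algebra.add, OF coeffs(1,3) coeffs(2,4)])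
       (auto intro!: has_derivative_eq_rhs[OF has_derivative_add[OF df dg]]
             simp: fun_eq_iff algebra_simps)
qed

lemma has_partials_in_mult:
  assumes "f \<in> generated_algebra G" "g \<in> generated_algebra G"
    and "has_partials_in S (generated_algebra G) f" "has_partials_in S (generated_algebra G) g"
  shows "has_partials_in S (generated_algebra G) (\<lambda>p. f p * g p)"
proof -
  obtain a1 b1 a2 b2 where
    coeffs: "a1 \<in> generated_algebra G" "b1 \<in> generated_algebra G"
      "a2 \<in> generated_algebra G" "b2 \<in> generated_algebra G"
    and df: "\<And>p. p \<in> S \<Longrightarrow> (f has_derivative (\<lambda>(u, v). a1 p * u + b1 p * v)) (at p)"
    and dg: "\<And>p. p \<in> S \<Longrightarrow> (g has_derivative (\<lambda>(u, v). a2 p * u + b2 p * v)) (at p)"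
    using assms(3,4) by (elim has_partials_inE) blast
  show ?thesis
    by (rule has_partials_inI[where a = "\<lambda>p. f p * a2 p + a1 p * g p" and b = "\<lambda>p. f p * b2 p + b1 p * g p"])
       (auto intro!: generated_algebra.add generated_algebra.mult assms(1,2) coeffs
             has_derivative_eq_rhs[OF has_derivative_mult[OF df dg]] simp: fun_eq_iff algebra_simps)
qed

lemma has_partials_in_diff:
  assumes "has_partials_in S (generated_algebra G) f" "has_partials_in S (generated_algebra G) g"
  shows "has_partials_in S (generated_algebra G) (\<lambda>p. f p - g p)"
proof -
  obtain a1 b1 a2 b2 where
    coeffs: "a1 \<in> generated_algebra G" "b1 \<in> generated_algebra G"
      "a2 \<in> generated_algebra G" "b2 \<in> generated_algebra G"
    and df: "\<And>p. p \<in> S \<Longrightarrow> (f has_derivative (\<lambda>(u, v). a1 p * u + b1 p * v)) (at p)"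
    and dg: "\<And>p. p \<in> S \<Longrightarrow> (g has_derivative (\<lambda>(u, v). a2 p * u + b2 p * v)) (at p)"
    using assms by (elim has_partials_inE) blast
  show ?thesis
    by (rule has_partials_inI[OF generated_algebra_diff generated_algebra_diff, OF coeffs(1,3) coeffs(2,4)])
       (auto intro!: has_derivative_eq_rhs[OF has_derivative_diff[OF df dg]]
             simp: fun_eq_iff algebra_simps)
qed

lemma has_partials_in_exp:
  assumes "(\<lambda>p. exp (h p)) \<in> generated_algebra G" "has_partials_in S (generated_algebra G) h"
  shows "has_partials_in S (generated_algebra G) (\<lambda>p. exp (h p))"
proof -
  obtain a b where coeffs: "a \<in> generated_algebra G" "b \<in> generated_algebra G"
    and dh: "\<And>p. p \<in> S \<Longrightarrow> (h has_derivative (\<lambda>(u, v). a p * u + b p * v)) (at p)"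
    using assms(2) by (elim has_partials_inE) blast
  show ?thesis
    by (rule has_partials_inI[where a = "\<lambda>p. exp (h p) * a p" and b = "\<lambda>p. exp (h p) * b p"])
       (auto intro!: generated_algebra.mult assms(1) coeffs
             has_derivative_eq_rhs[OF DERIV_compose_FDERIV[OF DERIV_exp dh]]
             simp: fun_eq_iff algebra_simps)
qed

lemma has_partials_in_inverse:
  assumes "(\<lambda>p. inverse (h p)) \<in> generated_algebra G" "has_partials_in S (generated_algebra G) h"
    and "\<And>p. p \<in> S \<Longrightarrow> h p \<noteq> 0"
  shows "has_partials_in S (generated_algebra G) (\<lambda>p. inverse (h p))"
proof -
  obtain a b where coeffs: "a \<in> generated_algebra G" "b \<in> generated_algebra G"
    and dh: "\<And>p. p \<in> S \<Longrightarrow> (h has_derivative (\<lambda>(u, v). a p * u + b p * v)) (at p)"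
    using assms(2) by (elim has_partials_inE) blast
  let ?w = "\<lambda>p. inverse (h p)"
  show ?thesis
  proof (rule has_partials_inI)
    show "(\<lambda>p. - (?w p * ?w p * a p)) \<in> generated_algebra G"
      "(\<lambda>p. - (?w p * ?w p * b p)) \<in> generated_algebra G"
      by (intro generated_algebra_uminus generated_algebra.mult assms(1) coeffs)+
    fix p assume "p \<in> S"
    show "((\<lambda>p. inverse (h p)) has_derivative
        (\<lambda>(u, v). - (?w p * ?w p * a p) * u + - (?w p * ?w p * b p) * v)) (at p)"
      by (rule has_derivative_eq_rhs[OF Deriv.has_derivative_inverse[OF assms(3) dh]])
         (use \<open>p \<in> S\<close> in \<open>auto simp: fun_eq_iff algebra_simps\<close>)
  qed
qed

lemma has_partials_in_generated_algebra:
  assumes "\<And>g. g \<in> G \<Longrightarrow> has_partials_in S (generated_algebra G) g" "h \<in> generated_algebra G"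
  shows "has_partials_in S (generated_algebra G) h"
  using assms(2)
proof induction
  case (generator g)
  then show ?case by (rule assms(1))
next
  case (const c)
  show ?case by (rule has_partials_in_const)
next
  case (add f g)
  then show ?case by (intro has_partials_in_add)
next
  case (mult f g)
  then show ?case by (intro has_partials_in_mult)
qed

lemma smooth_on_generated_algebra:
  assumes "\<And>g. g \<in> G \<Longrightarrow> has_partials_in S (generated_algebra G) g" "h \<in> generated_algebra G"
  shows "smooth_on S h"
  unfolding smooth_on_def
proof (intro exI[of _ "generated_algebra G"] conjI ballI)
  fix k assume "k \<in> generated_algebra G"
  with assms(1) have "has_partials_in S (generated_algebra G) k"
    by (rule has_partials_in_generated_algebra)
  then show "\<exists>a\<in>generated_algebra G. \<exists>b\<in>generated_algebra G.
      \<forall>p\<in>S. (k has_derivative (\<lambda>(u, v). a p * u + b p * v)) (at p)"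
    unfolding has_partials_in_def .
  then show "continuous_on S k"
    by (intro continuous_at_imp_continuous_on) (auto dest: has_derivative_continuous)
qed (fact assms(2))

definition web_chart :: "real \<times> real \<Rightarrow> real \<times> real" where
  "web_chart p = (snd p, (fst p + snd p) * exp (- fst p))"

lemma smooth_map_on_web_chart: "smooth_map_on S web_chart"
proof -
  define G where "G = {fst, snd, \<lambda>p::real \<times> real. exp (- fst p)}"
  have fst_mem: "fst \<in> generated_algebra G" and snd_mem: "snd \<in> generated_algebra G"
    and exp_mem: "(\<lambda>p. exp (- fst p)) \<in> generated_algebra G"
    by (auto simp: G_def intro: generated_algebra.generator)
  have partials: "has_partials_in S (generated_algebra G) g" if "g \<in> G" for g
  proof -
    have "has_partials_in S (generated_algebra G) fst"
      by (rule has_partials_inI[where a = "\<lambda>p. 1" and b = "\<lambda>p. 0"])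
         (auto intro: generated_algebra.const intro!: derivative_eq_intros)
    moreover have "has_partials_in S (generated_algebra G) snd"
      by (rule has_partials_inI[where a = "\<lambda>p. 0" and b = "\<lambda>p. 1"])
         (auto intro: generated_algebra.const intro!: derivative_eq_intros)
    moreover have "has_partials_in S (generated_algebra G) (\<lambda>p. exp (- fst p))"
      by (rule has_partials_inI[OF generated_algebra_uminus[OF exp_mem] generated_algebra.const])
         (auto intro!: derivative_eq_intros simp: fun_eq_iff)
    ultimately show ?thesis using that by (auto simp: G_def)
  qed
  have "(\<lambda>p. (fst p + snd p) * exp (- fst p)) \<in> generated_algebra G"
    by (intro generated_algebra.mult generated_algebra.add fst_mem snd_mem exp_mem)
  with partials have "smooth_on S (\<lambda>p. (fst p + snd p) * exp (- fst p))"
    by (rule smooth_on_generated_algebra)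
  moreover from partials snd_mem have "smooth_on S snd"
    by (rule smooth_on_generated_algebra)
  ultimately show ?thesis
    by (simp add: smooth_map_on_def web_chart_def)
qed

lemma web_chart_has_derivative:
  "(web_chart has_derivative
     (\<lambda>h. (snd h, exp (- fst q) * ((1 - fst q - snd q) * fst h + snd h)))) (at q)"
  unfolding web_chart_def[abs_def]
  by (rule has_derivative_eq_rhs, (rule derivative_eq_intros refl)+) (auto simp: fun_eq_iff algebra_simps)

lemma web_chart_inverse_has_derivative:
  assumes "open U" "U \<subseteq> {(x, y). x + y \<noteq> 1}" "q \<in> U"
    and inverse: "\<And>p. p \<in> U \<Longrightarrow> \<psi> (web_chart p) = p"
  shows "(\<psi> has_derivative
           (\<lambda>h. ((exp (fst q) * snd h - fst h) / (1 - fst q - snd q), fst h))) (at (web_chart q))"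
proof (rule has_derivative_inverse_strong[OF assms(1,3) _ inverse web_chart_has_derivative])
  show "continuous_on U web_chart"
    unfolding web_chart_def by (intro continuous_intros)
  define c where "c = 1 - fst q - snd q"
  have "c \<noteq> 0"
    using assms(2,3) by (auto simp: c_def)
  then have "exp (- fst q) * (c * ((exp (fst q) * t - s) / c) + s) = t" for s t
    by (simp add: exp_minus)
  then show "(\<lambda>h. (snd h, exp (- fst q) * ((1 - fst q - snd q) * fst h + snd h))) \<circ>
      (\<lambda>h. ((exp (fst q) * snd h - fst h) / (1 - fst q - snd q), fst h)) = id"
    unfolding c_def[symmetric] by (simp add: fun_eq_iff)
qed

lemma smooth_map_on_web_chart_inverse:
  assumes off_line: "\<And>Y. Y \<in> V \<Longrightarrow> fst (\<psi> Y) + snd (\<psi> Y) \<noteq> 1"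
    and deriv: "\<And>Y. Y \<in> V \<Longrightarrow> (\<psi> has_derivative
      (\<lambda>h. ((exp (fst (\<psi> Y)) * snd h - fst h) / (1 - fst (\<psi> Y) - snd (\<psi> Y)), fst h))) (at Y)"
  shows "smooth_map_on V \<psi>"
proof -
  define X where "X = (\<lambda>Y. fst (\<psi> Y))"
  define P where "P = (\<lambda>Y. snd (\<psi> Y))"
  define E where "E = (\<lambda>Y. exp (X Y))"
  define w where "w = (\<lambda>Y. inverse (1 - X Y - P Y))"
  define G where "G = {X, P, E, w}"
  have X_mem: "X \<in> generated_algebra G" and P_mem: "P \<in> generated_algebra G"
    and E_mem: "E \<in> generated_algebra G" and w_mem: "w \<in> generated_algebra G"
    by (simp_all add: G_def generated_algebra.generator)
  have X_partials: "has_partials_in V (generated_algebra G) X"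
  proof (rule has_partials_inI)
    show "(\<lambda>Y. - w Y) \<in> generated_algebra G" "(\<lambda>Y. E Y * w Y) \<in> generated_algebra G"
      by (intro generated_algebra_uminus generated_algebra.mult E_mem w_mem)+
    fix Y assume "Y \<in> V"
    show "(X has_derivative (\<lambda>(u, v). - w Y * u + E Y * w Y * v)) (at Y)"
      unfolding X_def
      by (rule has_derivative_eq_rhs[OF has_derivative_fst[OF deriv[OF \<open>Y \<in> V\<close>]]])
         (auto simp: fun_eq_iff X_def P_def E_def w_def divide_inverse algebra_simps)
  qed
  have P_partials: "has_partials_in V (generated_algebra G) P"
  proof (rule has_partials_inI[OF generated_algebra.const generated_algebra.const])
    fix Y assume "Y \<in> V"
    show "(P has_derivative (\<lambda>(u, v). 1 * u + 0 * v)) (at Y)"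
      unfolding P_def
      by (rule has_derivative_eq_rhs[OF has_derivative_snd[OF deriv[OF \<open>Y \<in> V\<close>]]])
         (auto simp: fun_eq_iff)
  qed
  have E_partials: "has_partials_in V (generated_algebra G) E"
    using E_mem X_partials unfolding E_def by (rule has_partials_in_exp)
  have w_partials: "has_partials_in V (generated_algebra G) w"
    unfolding w_def
  proof (rule has_partials_in_inverse)
    show "(\<lambda>Y. inverse (1 - X Y - P Y)) \<in> generated_algebra G"
      using w_mem by (simp only: w_def)
    show "has_partials_in V (generated_algebra G) (\<lambda>Y. 1 - X Y - P Y)"
      by (intro has_partials_in_diff has_partials_in_const X_partials P_partials)
    show "1 - X Y - P Y \<noteq> 0" if "Y \<in> V" for Y
      using off_line[OF that] by (simp add: X_def P_def)
  qed
  have partials: "has_partials_in V (generated_algebra G) g" if "g \<in> G" for g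
    using that X_partials P_partials E_partials w_partials by (auto simp: G_def)
  from partials X_mem have "smooth_on V X"
    by (rule smooth_on_generated_algebra)
  moreover from partials P_mem have "smooth_on V P"
    by (rule smooth_on_generated_algebra)
  ultimately show ?thesis
    by (simp add: smooth_map_on_def X_def P_def)
qed

lemma diffeo_onto_open_web_chart:
  assumes "open U" "U \<subseteq> {(x, y). x + y \<noteq> 1}" "inj_on web_chart U"
  shows "diffeo_onto_open U web_chart"
proof -
  define \<psi> where "\<psi> = inv_into U web_chart"
  have inverse: "\<psi> (web_chart p) = p" if "p \<in> U" for p
    using assms(3) that by (simp add: \<psi>_def)
  have "continuous_on U web_chart"
    unfolding web_chart_def by (intro continuous_intros)
  then have "open (web_chart ` U)"
    using assms(1,3) by (rule invariance_of_domain)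
  moreover have "smooth_map_on (web_chart ` U) \<psi>"
  proof (rule smooth_map_on_web_chart_inverse)
    fix Y assume "Y \<in> web_chart ` U"
    then obtain q where q: "q \<in> U" "Y = web_chart q" by blast
    then show "fst (\<psi> Y) + snd (\<psi> Y) \<noteq> 1"
      using assms(2) inverse by auto
    show "(\<psi> has_derivative (\<lambda>h. ((exp (fst (\<psi> Y)) * snd h - fst h) /
        (1 - fst (\<psi> Y) - snd (\<psi> Y)), fst h))) (at Y)"
      using web_chart_inverse_has_derivative[OF assms(1,2) q(1) inverse] q inverse by simp
  qed
  ultimately show ?thesis
    unfolding diffeo_onto_open_def using assms(1,3) smooth_map_on_web_chart inverse by blast
qed

lemma exp_level_ne:
  fixes a b y :: real
  assumes "a < b" and "(a + y < 1 \<and> b + y < 1) \<or> (1 < a + y \<and> 1 < b + y)"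
  shows "(a + y) * exp (- a) \<noteq> (b + y) * exp (- b)"
proof -
  have "\<exists>z. a < z \<and> z < b \<and>
      (b + y) * exp (- b) - (a + y) * exp (- a) = (b - a) * ((1 - z - y) * exp (- z))"
    by (rule MVT2[OF \<open>a < b\<close>, of "\<lambda>t. (t + y) * exp (- t)" "\<lambda>t. (1 - t - y) * exp (- t)"])
       (auto intro!: derivative_eq_intros simp: algebra_simps)
  then obtain z where z: "a < z" "z < b"
    and mvt: "(b + y) * exp (- b) - (a + y) * exp (- a) = (b - a) * ((1 - z - y) * exp (- z))"
    by blast
  have "1 - z - y \<noteq> 0"
    using assms(2) z by auto
  with \<open>a < b\<close> have "(b - a) * ((1 - z - y) * exp (- z)) \<noteq> 0"
    by simp
  then show ?thesis
    unfolding mvt[symmetric] by simp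
qed

lemma exp_level_eq_imp_eq:
  fixes a b y :: real
  assumes "(a + y < 1 \<and> b + y < 1) \<or> (1 < a + y \<and> 1 < b + y)"
    and "(a + y) * exp (- a) = (b + y) * exp (- b)"
  shows "a = b"
proof (rule linorder_cases[of a b])
  assume "a < b"
  from exp_level_ne[OF this assms(1)] assms(2) show ?thesis by metis
next
  assume "b < a"
  moreover from assms(1) have "(b + y < 1 \<and> a + y < 1) \<or> (1 < b + y \<and> 1 < a + y)"
    by blast
  ultimately have "(b + y) * exp (- b) \<noteq> (a + y) * exp (- a)"
    by (rule exp_level_ne)
  with assms(2) show ?thesis by metis
qed

lemma connected_off_line_same_side:
  fixes U :: "(real \<times> real) set"
  assumes "connected U" "U \<subseteq> {(x, y). x + y \<noteq> 1}" "p \<in> U" "q \<in> U" "fst p + snd p < 1"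
  shows "fst q + snd q < 1"
proof (rule ccontr)
  assume "\<not> fst q + snd q < 1"
  moreover have "connected ((\<lambda>r. fst r + snd r) ` U)"
    by (rule connected_continuous_image[OF _ assms(1)]) (intro continuous_intros)
  ultimately have "1 \<in> (\<lambda>r. fst r + snd r) ` U"
    using assms(3-5) unfolding connected_iff_interval by fastforce
  then show False
    using assms(2) by auto
qed

lemma inj_on_web_chart:
  assumes "connected U" "U \<subseteq> {(x, y). x + y \<noteq> 1}"
  shows "inj_on web_chart U"
proof (rule inj_onI)
  fix p q assume "p \<in> U" "q \<in> U" and "web_chart p = web_chart q"
  then have "snd p = snd q"
    and level: "(fst p + snd q) * exp (- fst p) = (fst q + snd q) * exp (- fst q)"
    by (auto simp: web_chart_def)
  have "(fst p + snd p < 1 \<and> fst q + snd q < 1) \<or> (1 < fst p + snd p \<and> 1 < fst q + snd q)"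
    using connected_off_line_same_side[OF assms \<open>p \<in> U\<close> \<open>q \<in> U\<close>]
      connected_off_line_same_side[OF assms \<open>q \<in> U\<close> \<open>p \<in> U\<close>] \<open>p \<in> U\<close> \<open>q \<in> U\<close> assms(2)
    by fastforce
  then have same_side: "(fst p + snd q < 1 \<and> fst q + snd q < 1) \<or> (1 < fst p + snd q \<and> 1 < fst q + snd q)"
    using \<open>snd p = snd q\<close> by simp
  have "fst p = fst q"
    using same_side level by (rule exp_level_eq_imp_eq)
  with \<open>snd p = snd q\<close> show "p = q"
    by (simp add: prod_eq_iff)
qed

lemma image_local_leaf_subset_line:
  assumes "\<And>r. r \<in> U \<Longrightarrow> g r = g q \<Longrightarrow> \<exists>t. \<phi> r = a + t *\<^sub>R v"
  shows "\<phi> ` local_leaf U g q \<subseteq> line a v"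
proof
  fix z assume "z \<in> \<phi> ` local_leaf U g q"
  then obtain r where "r \<in> local_leaf U g q" and z: "z = \<phi> r" by blast
  then have "r \<in> U" "g r = g q"
    using connected_component_subset unfolding local_leaf_def by blast+
  with assms z show "z \<in> line a v"
    unfolding line_def by blast
qed

lemma web_chart_leaves_in_lines:
  "\<forall>g\<in>{\<lambda>(x, y). x, \<lambda>(x, y). y, \<lambda>(x, y). (x + y) * exp (- x)}. \<forall>q\<in>U.
     \<exists>a v. v \<noteq> 0 \<and> web_chart ` local_leaf U g q \<subseteq> line a v"
proof -
  have "\<exists>a v. v \<noteq> 0 \<and> web_chart ` local_leaf U (\<lambda>(x, y). x) q \<subseteq> line a v" for q :: "real \<times> real"
  proof (intro exI conjI)
    show "(1, exp (- fst q)) \<noteq> 0"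
      by (simp add: zero_prod_def)
    show "web_chart ` local_leaf U (\<lambda>(x, y). x) q \<subseteq> line (0, fst q * exp (- fst q)) (1, exp (- fst q))"
    proof (rule image_local_leaf_subset_line)
      fix r :: "real \<times> real" assume "(\<lambda>(x, y). x) r = (\<lambda>(x, y). x) q"
      then show "\<exists>t. web_chart r = (0, fst q * exp (- fst q)) + t *\<^sub>R (1, exp (- fst q))"
        by (intro exI[of _ "snd r"]) (auto simp: web_chart_def case_prod_beta algebra_simps)
    qed
  qed
  moreover have "\<exists>a v. v \<noteq> 0 \<and> web_chart ` local_leaf U (\<lambda>(x, y). y) q \<subseteq> line a v" for q :: "real \<times> real"
  proof (intro exI conjI)
    show "(0::real, 1::real) \<noteq> 0"
      by (simp add: zero_prod_def)
    show "web_chart ` local_leaf U (\<lambda>(x, y). y) q \<subseteq> line (snd q, 0) (0, 1)"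
    proof (rule image_local_leaf_subset_line)
      fix r :: "real \<times> real" assume "(\<lambda>(x, y). y) r = (\<lambda>(x, y). y) q"
      then show "\<exists>t. web_chart r = (snd q, 0) + t *\<^sub>R (0, 1)"
        by (intro exI[of _ "(fst r + snd r) * exp (- fst r)"]) (auto simp: web_chart_def case_prod_beta)
    qed
  qed
  moreover have "\<exists>a v. v \<noteq> 0 \<and> web_chart ` local_leaf U (\<lambda>(x, y). (x + y) * exp (- x)) q \<subseteq> line a v"
    for q :: "real \<times> real"
  proof (intro exI conjI)
    show "(1::real, 0::real) \<noteq> 0"
      by (simp add: zero_prod_def)
    show "web_chart ` local_leaf U (\<lambda>(x, y). (x + y) * exp (- x)) q
        \<subseteq> line (0, (fst q + snd q) * exp (- fst q)) (1, 0)"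
    proof (rule image_local_leaf_subset_line)
      fix r :: "real \<times> real"
      assume "(\<lambda>(x, y). (x + y) * exp (- x)) r = (\<lambda>(x, y). (x + y) * exp (- x)) q"
      then show "\<exists>t. web_chart r = (0, (fst q + snd q) * exp (- fst q)) + t *\<^sub>R (1, 0)"
        by (intro exI[of _ "snd r"]) (auto simp: web_chart_def case_prod_beta)
    qed
  qed
  ultimately show ?thesis
    by blast
qed

lemma half_plane_neighbourhood:
  assumes "p \<in> {(x, y). x + y \<noteq> (1::real)}"
  obtains U where "p \<in> U" "open U" "connected U" "U \<subseteq> {(x, y). x + y \<noteq> 1}"
proof (cases "fst p + snd p < 1")
  case True
  have "{q. fst q + snd q < 1} = {q. inner (1::real, 1::real) q < 1}"
    by (auto simp: inner_prod_def)
  then have "connected {q :: real \<times> real. fst q + snd q < 1}"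
    by (simp add: convex_connected convex_halfspace_lt)
  moreover have "open {q :: real \<times> real. fst q + snd q < 1}"
    by (intro open_Collect_less continuous_intros)
  ultimately show ?thesis
    using True by (intro that) auto
next
  case False
  with assms have "1 < fst p + snd p"
    by auto
  have "{q. 1 < fst q + snd q} = {q. inner (1::real, 1::real) q > 1}"
    by (auto simp: inner_prod_def)
  then have "connected {q :: real \<times> real. 1 < fst q + snd q}"
    by (simp add: convex_connected convex_halfspace_gt)
  moreover have "open {q :: real \<times> real. 1 < fst q + snd q}"
    by (intro open_Collect_less continuous_intros)
  ultimately show ?thesis
    using \<open>1 < fst p + snd p\<close> by (intro that) auto
qed

theorem mainTheorem1:
  shows "linearizable_web {(x, y). x + y \<noteq> 1} (\<lambda>(x, y). x) (\<lambda>(x, y). y)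
           (\<lambda>(x, y). (x + y) * exp (- x))"
  unfolding linearizable_web_def
proof
  fix p :: "real \<times> real" assume "p \<in> {(x, y). x + y \<noteq> 1}"
  then obtain U where U: "p \<in> U" "open U" "connected U" "U \<subseteq> {(x, y). x + y \<noteq> 1}"
    by (rule half_plane_neighbourhood)
  have "diffeo_onto_open U web_chart"
    using U(2,4) inj_on_web_chart[OF U(3,4)] by (rule diffeo_onto_open_web_chart)
  with U(1,4) web_chart_leaves_in_lines[of U]
  show "\<exists>U \<phi>. p \<in> U \<and> U \<subseteq> {(x, y). x + y \<noteq> 1} \<and> diffeo_onto_open U \<phi> \<and>
      (\<forall>g\<in>{\<lambda>(x, y). x, \<lambda>(x, y). y, \<lambda>(x, y). (x + y) * exp (- x)}. \<forall>q\<in>U.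
         \<exists>a v. v \<noteq> 0 \<and> \<phi> ` local_leaf U g q \<subseteq> line a v)"
    by blast
qed

end
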